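(* Let $G$ be a graph with $n$ vertices and $m$ edges, and let $k$ be an integer. Then $G$ has an $\alpha$-labeling with critical number $k$ if and only if $n\leqslant m+1$, $G$ is bipartite, and there is a bipartition of $\widehat{G}$ and an arrangement of the vertices of $\widehat{G}$ such that the corresponding biadjacency matrix $A$ is graceful and $A$ has $k+1$ rows. Likewise, $G$ has a complete $\alpha$-labeling with critical number $k$ if and only if $n=m+1$, $G$ is bipartite, and there is a bipartition of $\widehat{G}$ and an arrangement of its vertices such that the corresponding biadjacency matrix $A$ is completely graceful and has $k+1$ rows.
   Context: Graphs are finite, simple and undirected. For a graph $G=(V,E)$ with $m$ edges, a $\beta$-labeling (graceful labeling) is an injective $f:V\to\{0,\ldots,m\}$ such that the edge labels $|f(u)-f(v)|$, $uv\in E$, are distinct. An $\alpha$-labeling with critical number $k\in\{0,\ldots,m\}$ is a $\beta$-labeling $f$ such that for every edge $uv$ either $f(u)\le k<f(v)$ or $f(v)\le k<f(u)$; it is complete if $f$ is bijective. If $G$ has $n\le m+1$ vertices, $\widehat{G}$ is $G$ with $m+1-n$ isolated vertices added. For a bipartite graph with parts $X,Y$ (with the vertices of each part ordered), the biadjacency matrix is the $|X|\times|Y|$ $0$-$1$ matrix whose $(x,y)$ entry is $1$ iff $xy$ is an edge. For a $p\times q$ matrix the box-value of position $(i,j)$ is $p+j-i$; for $c=1,\ldots,p+q-1$ the positions with box-value $c$ form a diagonal. A $0$-$1$ matrix is graceful if every diagonal contains at most one $1$, and completely graceful if every diagonal contains exactly one $1$. *)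

theory Defs
  imports Main "Jordan_Normal_Form.Matrix"
begin

definition simple_graph :: "'a set \<Rightarrow> 'a set set \<Rightarrow> bool" where
  "simple_graph V E \<longleftrightarrow> finite V \<and>
     (\<forall>e\<in>E. \<exists>u v. u \<in> V \<and> v \<in> V \<and> u \<noteq> v \<and> e = {u, v})"

definition beta_labeling :: "'a set \<Rightarrow> 'a set set \<Rightarrow> ('a \<Rightarrow> int) \<Rightarrow> bool" where
  "beta_labeling V E f \<longleftrightarrow> inj_on f V \<and> f ` V \<subseteq> {0..int (card E)} \<and>
     (\<forall>u v u' v'. {u, v} \<in> E \<longrightarrow> {u', v'} \<in> E \<longrightarrow>
        \<bar>f u - f v\<bar> = \<bar>f u' - f v'\<bar> \<longrightarrow> {u, v} = {u', v'})"

definition alpha_labeling :: "'a set \<Rightarrow> 'a set set \<Rightarrow> ('a \<Rightarrow> int) \<Rightarrow> int \<Rightarrow> bool" where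
  "alpha_labeling V E f k \<longleftrightarrow> beta_labeling V E f \<and> k \<in> {0..int (card E)} \<and>
     (\<forall>u v. {u, v} \<in> E \<longrightarrow> (f u \<le> k \<and> k < f v) \<or> (f v \<le> k \<and> k < f u))"

definition complete_alpha_labeling :: "'a set \<Rightarrow> 'a set set \<Rightarrow> ('a \<Rightarrow> int) \<Rightarrow> int \<Rightarrow> bool" where
  "complete_alpha_labeling V E f k \<longleftrightarrow> alpha_labeling V E f k \<and>
     bij_betw f V {0..int (card E)}"

definition is_bipartition :: "'a set \<Rightarrow> 'a set set \<Rightarrow> 'a set \<Rightarrow> 'a set \<Rightarrow> bool" where
  "is_bipartition V E X Y \<longleftrightarrow> X \<union> Y = V \<and> X \<inter> Y = {} \<and>
     (\<forall>e\<in>E. \<exists>x y. x \<in> X \<and> y \<in> Y \<and> e = {x, y})"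

definition bipartite :: "'a set \<Rightarrow> 'a set set \<Rightarrow> bool" where
  "bipartite V E \<longleftrightarrow> (\<exists>X Y. is_bipartition V E X Y)"

text \<open>G-hat: G with m+1-n fresh isolated vertices (the Inr vertices);
  the original vertices are embedded via Inl. Only used when n <= m+1.\<close>
definition hatV :: "'a set \<Rightarrow> 'a set set \<Rightarrow> ('a + nat) set" where
  "hatV V E = Inl ` V \<union> Inr ` {..< card E + 1 - card V}"

definition hatE :: "'a set set \<Rightarrow> ('a + nat) set set" where
  "hatE E = (\<lambda>e. Inl ` e) ` E"

text \<open>A bipartition of (V,E) together with an ordering of each part:
  xs lists the part X (rows), ys lists the part Y (columns).\<close>
definition ordered_bipartition :: "'b set \<Rightarrow> 'b set set \<Rightarrow> 'b list \<Rightarrow> 'b list \<Rightarrow> bool" where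
  "ordered_bipartition V E xs ys \<longleftrightarrow> distinct xs \<and> distinct ys \<and>
     is_bipartition V E (set xs) (set ys)"

definition biadj :: "'b set set \<Rightarrow> 'b list \<Rightarrow> 'b list \<Rightarrow> nat mat" where
  "biadj E xs ys = mat (length xs) (length ys)
     (\<lambda>(i, j). if {xs ! i, ys ! j} \<in> E then 1 else 0)"

text \<open>Box value of position (i,j) of a p x q matrix: p + j - i (1-based indices);
  with 0-based indices (i,j) this is p + (j+1) - (i+1) = p + j - i.\<close>
definition box_value :: "'c mat \<Rightarrow> nat \<times> nat \<Rightarrow> int" where
  "box_value A ij = int (dim_row A) + int (snd ij) - int (fst ij)"

definition diagonal :: "'c mat \<Rightarrow> int \<Rightarrow> (nat \<times> nat) set" where
  "diagonal A c = {(i, j). i < dim_row A \<and> j < dim_col A \<and> box_value A (i, j) = c}"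

definition zero_one_mat :: "nat mat \<Rightarrow> bool" where
  "zero_one_mat A \<longleftrightarrow> (\<forall>i < dim_row A. \<forall>j < dim_col A. A $$ (i, j) \<in> {0, 1})"

definition graceful_mat :: "nat mat \<Rightarrow> bool" where
  "graceful_mat A \<longleftrightarrow> zero_one_mat A \<and>
     (\<forall>c \<in> {1 .. int (dim_row A) + int (dim_col A) - 1}.
        card {ij \<in> diagonal A c. A $$ ij = 1} \<le> 1)"

definition completely_graceful_mat :: "nat mat \<Rightarrow> bool" where
  "completely_graceful_mat A \<longleftrightarrow> zero_one_mat A \<and>
     (\<forall>c \<in> {1 .. int (dim_row A) + int (dim_col A) - 1}.
        card {ij \<in> diagonal A c. A $$ ij = 1} = 1)"

end

theory Submission
  imports Defs
begin

text \<open>Listing the vertices of \<open>\<widehat>G\<close> by their labels \<open>0, \<dots>, m\<close>, the \<open>m + 1 - n\<close> added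
  isolated vertices taking the unused labels, and cutting the list after position \<open>k\<close> turns an
  \<open>\<alpha>\<close>-labeling with critical number \<open>k\<close> into an ordered bipartition: the rows carry the labels
  \<open>0, \<dots>, k\<close> and the columns the labels \<open>k + 1, \<dots>, m\<close>. An edge with labels \<open>i \<le> k < k + 1 + j\<close>
  sits at position \<open>(i, j)\<close>, whose box value \<open>k + 1 + j - i\<close> is exactly its edge label, so
  distinct edge labels amount to at most one \<open>1\<close> per diagonal. Conversely, the positions in the
  concatenation of rows and columns give back an \<open>\<alpha>\<close>-labeling. As \<open>\<widehat>G\<close> has \<open>m + 1\<close>
  vertices, its biadjacency matrix has \<open>m\<close> diagonals and \<open>m\<close> ones, so graceful and completely
  graceful coincide, and a complete \<open>\<alpha>\<close>-labeling is an \<open>\<alpha>\<close>-labeling of a graph with \<open>n = m + 1\<close>.\<close>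

section \<open>Graphs and biadjacency matrices\<close>

lemma simple_graph_edgeD:
  assumes "simple_graph V E" "{u, v} \<in> E"
  shows "u \<in> V" "v \<in> V"
proof -
  obtain a b where "a \<in> V" "b \<in> V" "{u, v} = {a, b}"
    using assms unfolding simple_graph_def by blast
  then show "u \<in> V" "v \<in> V" by (auto simp: doubleton_eq_iff)
qed

lemma simple_graph_edgeE:
  assumes "simple_graph V E" "e \<in> E"
  obtains u v where "e = {u, v}" "{u, v} \<in> E"
proof -
  obtain u v where "e = {u, v}" using assms unfolding simple_graph_def by meson
  then show thesis using that assms(2) by simp
qed

lemma card_hatV:
  assumes "finite V" "card V \<le> card E + 1"
  shows "card (hatV V E) = card E + 1"
proof -
  have "card (hatV V E) = card (Inl ` V :: ('a + nat) set) + card (Inr ` {..< card E + 1 - card V} :: ('a + nat) set)"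
    unfolding hatV_def by (rule card_Un_disjoint) (use assms(1) in auto)
  also have "\<dots> = card V + (card E + 1 - card V)"
    by (simp add: card_image)
  finally show ?thesis using assms(2) by simp
qed

lemma card_hatE: "card (hatE E) = card E"
  unfolding hatE_def by (rule card_image) (simp add: inj_on_def inj_image_eq_iff)

lemma doubleton_in_hatE_iff:
  "{a, b} \<in> hatE E \<longleftrightarrow> (\<exists>u v. a = Inl u \<and> b = Inl v \<and> {u, v} \<in> E)"
proof
  assume "{a, b} \<in> hatE E"
  then obtain e where e: "e \<in> E" "Inl ` e = {a, b}" unfolding hatE_def by auto
  have "a \<in> Inl ` e" "b \<in> Inl ` e" unfolding e(2) by simp_all
  then obtain u v where uv: "a = Inl u" "b = Inl v" "u \<in> e" "v \<in> e" by auto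
  have "Inl ` e = (Inl ` {u, v} :: ('a + nat) set)" using e(2) uv(1,2) by simp
  then have "e = {u, v}" by (rule inj_image_eq_iff[OF inj_Inl, THEN iffD1])
  then show "\<exists>u v. a = Inl u \<and> b = Inl v \<and> {u, v} \<in> E" using uv e(1) by blast
next
  assume "\<exists>u v. a = Inl u \<and> b = Inl v \<and> {u, v} \<in> E"
  then obtain u v where "a = Inl u" "b = Inl v" "{u, v} \<in> E" by blast
  then show "{a, b} \<in> hatE E" unfolding hatE_def by (auto intro: rev_image_eqI)
qed

lemma hatE_memE:
  assumes "simple_graph V E" "e \<in> hatE E"
  obtains u v where "e = {Inl u, Inl v}" "{u, v} \<in> E"
proof -
  obtain e' where "e' \<in> E" "e = Inl ` e'" using assms(2) unfolding hatE_def by blast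
  moreover obtain u v where "e' = {u, v}" "{u, v} \<in> E"
    by (rule simple_graph_edgeE[OF assms(1) calculation(1)])
  ultimately show thesis using that by simp
qed

lemma dim_biadj [simp]:
  "dim_row (biadj F xs ys) = length xs" "dim_col (biadj F xs ys) = length ys"
  by (simp_all add: biadj_def)

lemma biadj_index:
  "i < length xs \<Longrightarrow> j < length ys \<Longrightarrow>
    biadj F xs ys $$ (i, j) = (if {xs ! i, ys ! j} \<in> F then 1 else 0)"
  by (simp add: biadj_def)

lemma length_ordered_bipartition:
  assumes "ordered_bipartition W F xs ys"
  shows "length xs + length ys = card W"
  using assms unfolding ordered_bipartition_def is_bipartition_def
  by (metis card_Un_disjoint distinct_card finite_set)

lemma card_biadj_ones:
  assumes "ordered_bipartition W F xs ys"
  shows "card {(i, j). i < length xs \<and> j < length ys \<and> biadj F xs ys $$ (i, j) = 1} = card F"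
proof -
  let ?ones = "{(i, j). i < length xs \<and> j < length ys \<and> {xs ! i, ys ! j} \<in> F}"
  let ?edge = "\<lambda>(i, j). {xs ! i, ys ! j}"
  have distinct: "distinct xs" "distinct ys" and disjoint: "set xs \<inter> set ys = {}"
    and edges: "\<forall>e\<in>F. \<exists>x y. x \<in> set xs \<and> y \<in> set ys \<and> e = {x, y}"
    using assms unfolding ordered_bipartition_def is_bipartition_def by simp_all
  have edge_inj: "inj_on ?edge ?ones"
  proof (rule inj_onI)
    fix a b assume "a \<in> ?ones" "b \<in> ?ones" "?edge a = ?edge b"
    moreover obtain i j i' j' where ij: "a = (i, j)" "b = (i', j')" by fastforce
    ultimately have bounds: "i < length xs" "j < length ys" "i' < length xs" "j' < length ys"
      and same: "{xs ! i, ys ! j} = {xs ! i', ys ! j'}" by simp_all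
    have "xs ! i \<in> set xs" "ys ! j' \<in> set ys" using bounds by simp_all
    then have "xs ! i \<noteq> ys ! j'" using disjoint by (auto simp: disjoint_iff)
    moreover have "xs ! i = xs ! i' \<and> ys ! j = ys ! j' \<or> xs ! i = ys ! j' \<and> ys ! j = xs ! i'"
      using same by (simp add: doubleton_eq_iff)
    ultimately have "xs ! i = xs ! i'" "ys ! j = ys ! j'" by simp_all
    then show "a = b" using ij bounds distinct by (simp add: nth_eq_iff_index_eq)
  qed
  have edge_image: "?edge ` ?ones = F"
  proof
    show "?edge ` ?ones \<subseteq> F" by auto
    show "F \<subseteq> ?edge ` ?ones"
    proof
      fix e assume "e \<in> F"
      then obtain x y where xy: "x \<in> set xs" "y \<in> set ys" "e = {x, y}" using edges by blast
      obtain i where "i < length xs" "xs ! i = x" using xy(1) by (auto simp: in_set_conv_nth)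
      moreover obtain j where "j < length ys" "ys ! j = y" using xy(2) by (auto simp: in_set_conv_nth)
      ultimately show "e \<in> ?edge ` ?ones"
        using xy(3) \<open>e \<in> F\<close> by (intro image_eqI[of _ _ "(i, j)"]) simp_all
    qed
  qed
  have "card ?ones = card F" using card_image[OF edge_inj] edge_image by simp
  moreover have "{(i, j). i < length xs \<and> j < length ys \<and> biadj F xs ys $$ (i, j) = 1} = ?ones"
    by (auto simp: biadj_index split: if_splits)
  ultimately show ?thesis by simp
qed

section \<open>Graceful matrices\<close>

lemma graceful_mat_iff:
  "graceful_mat A \<longleftrightarrow> zero_one_mat A \<and>
    (\<forall>i j i' j'. i < dim_row A \<longrightarrow> j < dim_col A \<longrightarrow> i' < dim_row A \<longrightarrow> j' < dim_col A \<longrightarrow>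
       A $$ (i, j) = 1 \<longrightarrow> A $$ (i', j') = 1 \<longrightarrow> int j - int i = int j' - int i' \<longrightarrow>
       i = i' \<and> j = j')"
  (is "_ \<longleftrightarrow> _ \<and> ?distinct_diagonals")
proof -
  let ?ones = "\<lambda>c. {ij \<in> diagonal A c. A $$ ij = 1}"
  let ?range = "{1 .. int (dim_row A) + int (dim_col A) - 1}"
  have "finite (?ones c)" for c
    by (rule finite_subset[of _ "{..<dim_row A} \<times> {..<dim_col A}"]) (auto simp: diagonal_def)
  then have "card (?ones c) \<le> 1 \<longleftrightarrow> (\<forall>a\<in>?ones c. \<forall>b\<in>?ones c. a = b)" for c
    using card_le_Suc0_iff_eq[of "?ones c"] by simp
  moreover have "(\<forall>c \<in> ?range. \<forall>a\<in>?ones c. \<forall>b\<in>?ones c. a = b) \<longleftrightarrow> ?distinct_diagonals"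
  proof (intro iffI allI impI)
    fix i j i' j'
    assume diag: "\<forall>c \<in> ?range. \<forall>a\<in>?ones c. \<forall>b\<in>?ones c. a = b"
      and ij: "i < dim_row A" "j < dim_col A" "i' < dim_row A" "j' < dim_col A"
        "A $$ (i, j) = 1" "A $$ (i', j') = 1" "int j - int i = int j' - int i'"
    let ?c = "box_value A (i, j)"
    have "(i, j) \<in> ?ones ?c" "(i', j') \<in> ?ones ?c"
      using ij by (auto simp: diagonal_def box_value_def)
    moreover have "?c \<in> ?range"
      using ij by (auto simp: box_value_def)
    ultimately have "(i, j) = (i', j')" using diag by meson
    then show "i = i' \<and> j = j'" by simp
  next
    assume distinct_diagonals: ?distinct_diagonals
    show "\<forall>c \<in> ?range. \<forall>a\<in>?ones c. \<forall>b\<in>?ones c. a = b"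
    proof (intro ballI)
      fix c a b assume a: "a \<in> ?ones c" and b: "b \<in> ?ones c"
      obtain i j i' j' where ab: "a = (i, j)" "b = (i', j')" by fastforce
      have "i < dim_row A" "j < dim_col A" "i' < dim_row A" "j' < dim_col A"
        "A $$ (i, j) = 1" "A $$ (i', j') = 1" "int j - int i = int j' - int i'"
        using a b unfolding ab diagonal_def box_value_def by auto
      then show "a = b" using distinct_diagonals ab by simp
    qed
  qed
  ultimately show ?thesis unfolding graceful_mat_def by simp
qed

lemma completely_graceful_if_enough_ones:
  assumes graceful: "graceful_mat A"
    and many_ones: "dim_row A + dim_col A \<le>
      card {(i, j). i < dim_row A \<and> j < dim_col A \<and> A $$ (i, j) = 1} + 1"
  shows "completely_graceful_mat A"
proof -
  define ones where "ones = {(i, j). i < dim_row A \<and> j < dim_col A \<and> A $$ (i, j) = 1}"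
  define R where "R = {1 .. int (dim_row A) + int (dim_col A) - 1}"
  have diag_finite: "finite (diagonal A c)" for c
    by (rule finite_subset[of _ "{..<dim_row A} \<times> {..<dim_col A}"]) (auto simp: diagonal_def)
  have "inj_on (box_value A) ones"
  proof (rule inj_onI)
    fix a b assume "a \<in> ones" "b \<in> ones" "box_value A a = box_value A b"
    moreover obtain i j i' j' where "a = (i, j)" "b = (i', j')" by fastforce
    ultimately show "a = b"
      using graceful unfolding graceful_mat_iff ones_def box_value_def by auto
  qed
  then have "card R \<le> card (box_value A ` ones)"
    using many_ones by (simp add: card_image R_def ones_def)
  moreover have "box_value A ` ones \<subseteq> R"
    by (auto simp: ones_def R_def box_value_def)
  ultimately have onto: "box_value A ` ones = R"
    by (intro card_seteq) (simp_all add: R_def)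
  show ?thesis unfolding completely_graceful_mat_def
  proof (intro conjI ballI)
    show "zero_one_mat A" using graceful unfolding graceful_mat_def by blast
    fix c assume c: "c \<in> {1 .. int (dim_row A) + int (dim_col A) - 1}"
    let ?T = "{ij \<in> diagonal A c. A $$ ij = 1}"
    obtain ij where "ij \<in> ones" "box_value A ij = c"
      using c onto unfolding R_def by (metis imageE)
    then have "ij \<in> ?T" by (auto simp: ones_def diagonal_def)
    then have "?T \<noteq> {}" by (metis empty_iff)
    then have "card ?T \<noteq> 0" using diag_finite[of c] by simp
    moreover have "card ?T \<le> 1" using graceful c unfolding graceful_mat_def by blast
    ultimately show "card ?T = 1" by linarith
  qed
qed

lemma graceful_if_completely_graceful: "completely_graceful_mat A \<Longrightarrow> graceful_mat A"
  unfolding completely_graceful_mat_def graceful_mat_def by simp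

lemma completely_graceful_if_graceful_biadj:
  assumes "ordered_bipartition W F xs ys" "card W \<le> card F + 1" "graceful_mat (biadj F xs ys)"
  shows "completely_graceful_mat (biadj F xs ys)"
  using completely_graceful_if_enough_ones[OF assms(3)] card_biadj_ones[OF assms(1)]
    length_ordered_bipartition[OF assms(1)] assms(2)
  by simp

section \<open>Alpha-labelings\<close>

definition separates_at :: "'a set set \<Rightarrow> ('a \<Rightarrow> int) \<Rightarrow> int \<Rightarrow> bool" where
  "separates_at E f k \<longleftrightarrow>
     (\<forall>u v. {u, v} \<in> E \<longrightarrow> f u \<le> k \<and> k < f v \<or> f v \<le> k \<and> k < f u)"

definition distinct_edge_labels :: "'a set set \<Rightarrow> ('a \<Rightarrow> int) \<Rightarrow> bool" where
  "distinct_edge_labels E f \<longleftrightarrow> (\<forall>u v u' v'. {u, v} \<in> E \<longrightarrow> {u', v'} \<in> E \<longrightarrow>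
     \<bar>f u - f v\<bar> = \<bar>f u' - f v'\<bar> \<longrightarrow> {u, v} = {u', v'})"

lemma alpha_labeling_iff:
  "alpha_labeling V E f k \<longleftrightarrow> inj_on f V \<and> f ` V \<subseteq> {0..int (card E)} \<and>
     k \<in> {0..int (card E)} \<and> distinct_edge_labels E f \<and> separates_at E f k"
  unfolding alpha_labeling_def beta_labeling_def separates_at_def distinct_edge_labels_def
  by blast

lemma separates_atE:
  assumes "separates_at E f k" "{u, v} \<in> E"
  obtains a b where "{u, v} = {a, b}" "f a \<le> k" "k < f b"
  using assms unfolding separates_at_def by (metis insert_commute)

lemma card_le_if_labels_in_range:
  assumes "inj_on f V" "f ` V \<subseteq> {0..int m}"
  shows "card V \<le> m + 1"
proof -
  have "card V = card (f ` V)" using assms(1) by (simp add: card_image)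
  also have "\<dots> \<le> card {0..int m}" using assms(2) by (intro card_mono) simp_all
  finally show ?thesis by simp
qed

lemma bipartite_if_separates_at:
  assumes "simple_graph V E" "separates_at E f k"
  shows "bipartite V E"
proof -
  let ?X = "{v \<in> V. f v \<le> k}" and ?Y = "{v \<in> V. k < f v}"
  have "is_bipartition V E ?X ?Y" unfolding is_bipartition_def
  proof (intro conjI ballI)
    fix e assume "e \<in> E"
    then obtain u v where e: "e = {u, v}" "{u, v} \<in> E" by (rule simple_graph_edgeE[OF assms(1)])
    then obtain a b where ab: "e = {a, b}" "f a \<le> k" "k < f b" using assms(2) by (metis separates_atE)
    then have "a \<in> V" "b \<in> V" using simple_graph_edgeD[OF assms(1)] e by metis+
    then show "\<exists>x y. x \<in> ?X \<and> y \<in> ?Y \<and> e = {x, y}" using ab by blast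
  qed auto
  then show ?thesis unfolding bipartite_def by blast
qed

lemma complete_alpha_labeling_iff:
  "complete_alpha_labeling V E f k \<longleftrightarrow> alpha_labeling V E f k \<and> card V = card E + 1"
proof
  assume complete: "complete_alpha_labeling V E f k"
  then have "card V = card {0..int (card E)}"
    unfolding complete_alpha_labeling_def by (blast intro: bij_betw_same_card)
  then show "alpha_labeling V E f k \<and> card V = card E + 1"
    using complete unfolding complete_alpha_labeling_def by simp
next
  assume alpha: "alpha_labeling V E f k \<and> card V = card E + 1"
  then have inj: "inj_on f V" and range: "f ` V \<subseteq> {0..int (card E)}"
    unfolding alpha_labeling_iff by blast+
  have "card {0..int (card E)} \<le> card (f ` V)" using alpha inj by (simp add: card_image)
  then have "f ` V = {0..int (card E)}" using range by (intro card_seteq) simp_all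
  then show "complete_alpha_labeling V E f k"
    using alpha inj unfolding complete_alpha_labeling_def bij_betw_def by blast
qed

section \<open>Vertex lists ordered by label\<close>

definition lists_by_label :: "'a set \<Rightarrow> ('a \<Rightarrow> int) \<Rightarrow> ('a + 'b) list \<Rightarrow> bool" where
  "lists_by_label V f zs \<longleftrightarrow>
     (\<forall>v\<in>V. 0 \<le> f v \<and> f v < int (length zs) \<and> zs ! nat (f v) = Inl v)"

locale labeled_listing =
  fixes V :: "'a set" and E :: "'a set set" and f :: "'a \<Rightarrow> int"
    and zs :: "('a + nat) list" and k :: nat
  assumes simple: "simple_graph V E"
    and distinct: "distinct zs"
    and set_eq: "set zs = hatV V E"
    and length_eq: "length zs = card E + 1"
    and listed: "lists_by_label V f zs"
    and k_less_length: "k < length zs"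
begin

abbreviation rows :: "('a + nat) list" where "rows \<equiv> take (k + 1) zs"

abbreviation cols :: "('a + nat) list" where "cols \<equiv> drop (k + 1) zs"

abbreviation matrix :: "nat mat" where "matrix \<equiv> biadj (hatE E) rows cols"

lemma label_bounds:
  assumes "v \<in> V"
  shows "0 \<le> f v" "f v < int (length zs)" "zs ! nat (f v) = Inl v"
  using listed assms unfolding lists_by_label_def by auto

lemma nth_eq_Inl_iff:
  assumes "i < length zs"
  shows "zs ! i = Inl u \<longleftrightarrow> u \<in> V \<and> f u = int i"
proof
  assume at_i: "zs ! i = Inl u"
  then have "Inl u \<in> hatV V E" using assms set_eq nth_mem by metis
  then have u: "u \<in> V" unfolding hatV_def by auto
  have "nat (f u) < length zs" using label_bounds[OF u] by linarith
  moreover have "zs ! nat (f u) = zs ! i" using label_bounds(3)[OF u] at_i by simp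
  ultimately have "nat (f u) = i" using distinct assms nth_eq_iff_index_eq by blast
  then show "u \<in> V \<and> f u = int i" using u label_bounds(1)[OF u] by auto
next
  assume "u \<in> V \<and> f u = int i"
  then show "zs ! i = Inl u" using label_bounds(3) by (metis nat_int)
qed

lemma length_rows: "length rows = k + 1"
  using k_less_length by simp

lemma Inl_in_rows_iff: "Inl u \<in> set rows \<longleftrightarrow> u \<in> V \<and> f u \<le> int k"
proof
  assume "Inl u \<in> set rows"
  then obtain i where i: "i < k + 1" "zs ! i = Inl u"
    using k_less_length by (auto simp: in_set_conv_nth)
  then have "u \<in> V \<and> f u = int i" using k_less_length nth_eq_Inl_iff by simp
  then show "u \<in> V \<and> f u \<le> int k" using i by auto
next
  assume u: "u \<in> V \<and> f u \<le> int k"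
  then have "nat (f u) < k + 1" by linarith
  moreover have "rows ! nat (f u) = Inl u" using calculation label_bounds(3) u by simp
  ultimately show "Inl u \<in> set rows" using length_rows by (metis nth_mem)
qed

lemma Inl_in_cols_iff: "Inl u \<in> set cols \<longleftrightarrow> u \<in> V \<and> int k < f u"
proof
  assume "Inl u \<in> set cols"
  then obtain j where j: "j < length cols" "cols ! j = Inl u" by (auto simp: in_set_conv_nth)
  then have "u \<in> V \<and> f u = int (k + 1 + j)" using k_less_length nth_eq_Inl_iff by simp
  then show "u \<in> V \<and> int k < f u" by auto
next
  assume u: "u \<in> V \<and> int k < f u"
  define j where "j = nat (f u) - (k + 1)"
  have "nat (f u) = k + 1 + j" "j < length cols"
    using u label_bounds(2)[of u] unfolding j_def by auto
  moreover have "cols ! j = zs ! (k + 1 + j)" using calculation(2) by simp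
  ultimately have "cols ! j = Inl u" "j < length cols" using label_bounds(3)[of u] u by metis+
  then show "Inl u \<in> set cols" by (metis nth_mem)
qed

lemma labels_inj: "inj_on f V"
proof (rule inj_onI)
  fix a b assume "a \<in> V" "b \<in> V" "f a = f b"
  then have "(Inl a :: 'a + nat) = Inl b" using label_bounds(3) by metis
  then show "a = b" by simp
qed

lemma labels_range: "f ` V \<subseteq> {0..int (card E)}"
  using label_bounds(1,2) length_eq by fastforce

lemma is_bipartition_iff_separates_at:
  "is_bipartition (hatV V E) (hatE E) (set rows) (set cols) \<longleftrightarrow> separates_at E f (int k)"
proof
  assume bip: "is_bipartition (hatV V E) (hatE E) (set rows) (set cols)"
  show "separates_at E f (int k)" unfolding separates_at_def
  proof (intro allI impI)
    fix u v assume "{u, v} \<in> E"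
    then have "{Inl u, Inl v} \<in> hatE E" by (auto simp: doubleton_in_hatE_iff)
    then obtain x y where "x \<in> set rows" "y \<in> set cols" "{Inl u, Inl v} = {x, y}"
      using bip unfolding is_bipartition_def by (meson bspec)
    then have "Inl u \<in> set rows \<and> Inl v \<in> set cols \<or> Inl v \<in> set rows \<and> Inl u \<in> set cols"
      by (auto simp: doubleton_eq_iff)
    then show "f u \<le> int k \<and> int k < f v \<or> f v \<le> int k \<and> int k < f u"
      using Inl_in_rows_iff Inl_in_cols_iff by blast
  qed
next
  assume sep: "separates_at E f (int k)"
  have "set rows \<union> set cols = hatV V E"
    using set_eq by (metis append_take_drop_id set_append)
  moreover have "set rows \<inter> set cols = {}"
    using distinct by (metis append_take_drop_id distinct_append)
  moreover have "\<exists>x y. x \<in> set rows \<and> y \<in> set cols \<and> e = {x, y}" if edge: "e \<in> hatE E" for e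
  proof -
    obtain u v where e: "e = {Inl u, Inl v}" "{u, v} \<in> E" by (rule hatE_memE[OF simple edge])
    obtain a b where ab: "{u, v} = {a, b}" "f a \<le> int k" "int k < f b"
      by (rule separates_atE[OF sep e(2)])
    then have "a \<in> V" "b \<in> V" using simple_graph_edgeD[OF simple] e(2) by metis+
    then have "Inl a \<in> set rows" "Inl b \<in> set cols"
      using ab Inl_in_rows_iff Inl_in_cols_iff by simp_all
    moreover have "e = {Inl a, Inl b}" using e(1) ab(1) by (auto simp: doubleton_eq_iff)
    ultimately show ?thesis by blast
  qed
  ultimately show "is_bipartition (hatV V E) (hatE E) (set rows) (set cols)"
    unfolding is_bipartition_def by blast
qed

lemma biadj_eq_1_iff:
  assumes "i \<le> k" "j < length cols"
  shows "matrix $$ (i, j) = 1 \<longleftrightarrow>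
    (\<exists>u v. {u, v} \<in> E \<and> f u = int i \<and> f v = int (k + 1 + j))"
proof -
  have bounds: "i < length zs" "k + 1 + j < length zs" using assms k_less_length by auto
  have "matrix $$ (i, j) = 1 \<longleftrightarrow> {zs ! i, zs ! (k + 1 + j)} \<in> hatE E"
    using assms length_rows by (simp add: biadj_def)
  also have "\<dots> \<longleftrightarrow> (\<exists>u v. zs ! i = Inl u \<and> zs ! (k + 1 + j) = Inl v \<and> {u, v} \<in> E)"
    by (rule doubleton_in_hatE_iff)
  also have "\<dots> \<longleftrightarrow> (\<exists>u v. {u, v} \<in> E \<and> f u = int i \<and> f v = int (k + 1 + j))"
    using nth_eq_Inl_iff[OF bounds(1)] nth_eq_Inl_iff[OF bounds(2)] simple_graph_edgeD[OF simple]
    by blast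
  finally show ?thesis .
qed

lemma graceful_matrix_iff:
  "graceful_mat matrix \<longleftrightarrow>
    (\<forall>i j i' j'. i \<le> k \<longrightarrow> j < length cols \<longrightarrow> i' \<le> k \<longrightarrow> j' < length cols \<longrightarrow>
       matrix $$ (i, j) = 1 \<longrightarrow> matrix $$ (i', j') = 1 \<longrightarrow> int j - int i = int j' - int i' \<longrightarrow>
       i = i' \<and> j = j')"
proof -
  have "dim_row matrix = k + 1" "dim_col matrix = length cols" "zero_one_mat matrix"
    using length_rows by (simp_all add: biadj_def zero_one_mat_def)
  then show ?thesis unfolding graceful_mat_iff by (simp add: less_Suc_eq_le)
qed

lemma edge_positionE:
  assumes "{a, b} \<in> E" "f a \<le> int k" "int k < f b"
  obtains i j where "i \<le> k" "j < length cols" "matrix $$ (i, j) = 1"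
    "f a = int i" "f b = int (k + 1 + j)"
proof -
  have "a \<in> V" "b \<in> V" using simple_graph_edgeD[OF simple assms(1)] by simp_all
  then have "0 \<le> f a" "f b < int (length zs)" using label_bounds by simp_all
  then have "nat (f a) \<le> k" "nat (f b) - (k + 1) < length cols"
    "f a = int (nat (f a))" "f b = int (k + 1 + (nat (f b) - (k + 1)))"
    using assms by auto
  then show thesis using that assms(1) biadj_eq_1_iff by metis
qed

lemma distinct_edge_labels_if_graceful:
  assumes sep: "separates_at E f (int k)" and graceful: "graceful_mat matrix"
  shows "distinct_edge_labels E f"
  unfolding distinct_edge_labels_def
proof (intro allI impI)
  fix u v u' v' assume e: "{u, v} \<in> E" and e': "{u', v'} \<in> E"
    and same_label: "\<bar>f u - f v\<bar> = \<bar>f u' - f v'\<bar>"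
  obtain a b where ab: "{u, v} = {a, b}" "f a \<le> int k" "int k < f b"
    by (rule separates_atE[OF sep e])
  obtain a' b' where ab': "{u', v'} = {a', b'}" "f a' \<le> int k" "int k < f b'"
    by (rule separates_atE[OF sep e'])
  obtain i j where ij: "i \<le> k" "j < length cols" "matrix $$ (i, j) = 1"
    "f a = int i" "f b = int (k + 1 + j)"
    using edge_positionE e ab by metis
  obtain i' j' where ij': "i' \<le> k" "j' < length cols" "matrix $$ (i', j') = 1"
    "f a' = int i'" "f b' = int (k + 1 + j')"
    using edge_positionE e' ab' by metis
  have "\<bar>f a - f b\<bar> = \<bar>f a' - f b'\<bar>"
    using same_label ab(1) ab'(1) by (auto simp: doubleton_eq_iff abs_minus_commute)
  then have "int j - int i = int j' - int i'" using ij ij' by simp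
  then have "i = i' \<and> j = j'" using graceful ij ij' unfolding graceful_matrix_iff by blast
  then have "a = a'" "b = b'"
    using ij ij' labels_inj simple_graph_edgeD[OF simple] e e' ab ab' by (metis inj_onD)+
  then show "{u, v} = {u', v'}" using ab ab' by simp
qed

lemma graceful_if_distinct_edge_labels:
  assumes "distinct_edge_labels E f"
  shows "graceful_mat matrix"
  unfolding graceful_matrix_iff
proof (intro allI impI)
  fix i j i' j'
  assume bounds: "i \<le> k" "j < length cols" "i' \<le> k" "j' < length cols"
    and ones: "matrix $$ (i, j) = 1" "matrix $$ (i', j') = 1"
    and same_diagonal: "int j - int i = int j' - int i'"
  obtain u v where uv: "{u, v} \<in> E" "f u = int i" "f v = int (k + 1 + j)"
    using ones(1) bounds biadj_eq_1_iff by auto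
  obtain u' v' where uv': "{u', v'} \<in> E" "f u' = int i'" "f v' = int (k + 1 + j')"
    using ones(2) bounds biadj_eq_1_iff by auto
  have "{u, v} = {u', v'}"
    using assms uv uv' same_diagonal unfolding distinct_edge_labels_def by auto
  then have "u = u' \<and> v = v'" using uv uv' bounds by (auto simp: doubleton_eq_iff)
  then show "i = i' \<and> j = j'" using uv uv' by auto
qed

lemma alpha_labeling_iff_graceful_split:
  "alpha_labeling V E f (int k) \<longleftrightarrow>
     is_bipartition (hatV V E) (hatE E) (set rows) (set cols) \<and> graceful_mat matrix"
  using alpha_labeling_iff labels_inj labels_range is_bipartition_iff_separates_at
    distinct_edge_labels_if_graceful graceful_if_distinct_edge_labels k_less_length length_eq
  by auto

end

lemma obtain_labels_of_listing:
  assumes "Inl ` V \<subseteq> set zs"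
  obtains f where "lists_by_label V f zs"
proof -
  have "\<forall>v\<in>V. \<exists>i. i < length zs \<and> zs ! i = Inl v"
    using assms by (auto simp: in_set_conv_nth)
  then obtain pos where "\<forall>v\<in>V. pos v < length zs \<and> zs ! pos v = Inl v"
    by (rule bchoice[THEN exE])
  then have "lists_by_label V (int \<circ> pos) zs" unfolding lists_by_label_def by simp
  then show thesis by (rule that)
qed

lemma obtain_listing_by_label:
  assumes "finite V" "inj_on f V" "f ` V \<subseteq> {0..int (card E)}"
  obtains zs :: "('a + nat) list"
  where "distinct zs" "set zs = hatV V E" "length zs = card E + 1" "lists_by_label V f zs"
proof -
  define m where "m = card E"
  define pos where "pos = nat \<circ> f"
  define L where "L = pos ` V"
  define U where "U = {..<m + 1} - L"
  define R where "R = (Inr ` {..<m + 1 - card V} :: ('a + nat) set)"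
  have labels: "0 \<le> f v" "f v \<le> int m" if "v \<in> V" for v
    using assms(3) that unfolding m_def by auto
  have "inj_on pos V"
    using assms(2) labels unfolding pos_def inj_on_def by (metis comp_apply nat_eq_iff2)
  then have pos_bij: "bij_betw pos V L" unfolding L_def by (rule inj_on_imp_bij_betw)
  have L_sub: "L \<subseteq> {..<m + 1}" using labels unfolding L_def pos_def by force
  have "card U = card R"
    using card_Diff_subset[OF _ L_sub] bij_betw_same_card[OF pos_bij] L_sub
    unfolding U_def R_def by (simp add: card_image finite_subset)
  then obtain h where h: "bij_betw h U R"
    by (metis finite_same_card_bij U_def R_def finite_Diff finite_lessThan finite_imageI)
  define g where "g i = (if i \<in> L then Inl (inv_into V pos i) else h i)" for i
  have "bij_betw (Inl \<circ> inv_into V pos) L (Inl ` V)"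
    using bij_betw_inv_into[OF pos_bij] by (rule bij_betw_trans) (simp add: bij_betw_imageI)
  then have "bij_betw g L (Inl ` V)" by (rule bij_betw_cong[THEN iffD1, rotated]) (simp add: g_def)
  moreover have "bij_betw g U R" using h by (rule bij_betw_cong[THEN iffD1, rotated]) (simp add: g_def U_def)
  ultimately have "bij_betw g (L \<union> U) (Inl ` V \<union> R)"
    by (rule bij_betw_combine) (auto simp: R_def)
  moreover have "L \<union> U = {..<m + 1}" "Inl ` V \<union> R = hatV V E"
    using L_sub unfolding U_def R_def hatV_def m_def by auto
  ultimately have g_bij: "bij_betw g {..<m + 1} (hatV V E)" by simp
  have g_label: "g (nat (f v)) = Inl v" if "v \<in> V" for v
    using that inv_into_f_f[OF \<open>inj_on pos V\<close> that] unfolding g_def L_def pos_def by simp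
  show thesis
  proof (rule that)
    let ?zs = "map g [0..<m + 1]"
    show "distinct ?zs" "set ?zs = hatV V E"
      using g_bij by (simp_all add: distinct_map bij_betw_def atLeast0LessThan del: upt_Suc)
    show "length ?zs = card E + 1" by (simp add: m_def)
    show "lists_by_label V f ?zs" unfolding lists_by_label_def
    proof
      fix v assume v: "v \<in> V"
      then have "nat (f v) < m + 1" using labels by fastforce
      then show "0 \<le> f v \<and> f v < int (length ?zs) \<and> ?zs ! nat (f v) = Inl v"
        using labels[OF v] g_label[OF v] by (simp del: upt_Suc)
    qed
  qed
qed

lemma graceful_split_if_alpha_labeling:
  assumes simple: "simple_graph V E" and alpha: "alpha_labeling V E f (int k)"
  obtains xs ys where "ordered_bipartition (hatV V E) (hatE E) xs ys"
    "graceful_mat (biadj (hatE E) xs ys)" "length xs = k + 1"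
proof -
  have k_le: "k \<le> card E" using alpha unfolding alpha_labeling_iff by auto
  have "finite V" using simple unfolding simple_graph_def by blast
  moreover have "inj_on f V" "f ` V \<subseteq> {0..int (card E)}"
    using alpha unfolding alpha_labeling_iff by auto
  ultimately obtain zs where "distinct zs" "set zs = hatV V E" "length zs = card E + 1"
    "lists_by_label V f zs"
    by (rule obtain_listing_by_label)
  then interpret labeled_listing V E f zs k
    using simple k_le by unfold_locales auto
  have "is_bipartition (hatV V E) (hatE E) (set rows) (set cols)" "graceful_mat matrix"
    using alpha alpha_labeling_iff_graceful_split by blast+
  moreover have "distinct rows" "distinct cols" using distinct by simp_all
  ultimately show thesis using that length_rows unfolding ordered_bipartition_def by blast
qed

lemma alpha_labeling_if_graceful_split:
  assumes simple: "simple_graph V E" and small: "card V \<le> card E + 1"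
    and split: "ordered_bipartition (hatV V E) (hatE E) xs ys"
    and graceful: "graceful_mat (biadj (hatE E) xs ys)" and rows: "length xs = k + 1"
  obtains f where "alpha_labeling V E f (int k)"
proof -
  let ?zs = "xs @ ys"
  have "finite V" using simple unfolding simple_graph_def by blast
  have zs: "distinct ?zs" "set ?zs = hatV V E"
    using split unfolding ordered_bipartition_def is_bipartition_def by auto
  moreover have "length ?zs = card E + 1"
    using length_ordered_bipartition[OF split] card_hatV[OF \<open>finite V\<close> small] by simp
  moreover have "Inl ` V \<subseteq> set ?zs" unfolding zs(2) hatV_def by (rule Un_upper1)
  then obtain f where "lists_by_label V f ?zs" by (rule obtain_labels_of_listing)
  ultimately interpret labeled_listing V E f ?zs k
    using simple rows by unfold_locales auto
  have "take (k + 1) ?zs = xs" "drop (k + 1) ?zs = ys" using rows by simp_all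
  then have "alpha_labeling V E f (int k)"
    using alpha_labeling_iff_graceful_split split graceful unfolding ordered_bipartition_def by simp
  then show thesis by (rule that)
qed

lemma alpha_labeling_iff_graceful_biadj:
  assumes simple: "simple_graph V E"
  shows "(\<exists>f. alpha_labeling V E f (int k)) \<longleftrightarrow>
    card V \<le> card E + 1 \<and> bipartite V E \<and>
    (\<exists>xs ys. ordered_bipartition (hatV V E) (hatE E) xs ys \<and>
      graceful_mat (biadj (hatE E) xs ys) \<and> dim_row (biadj (hatE E) xs ys) = k + 1)"
  (is "_ \<longleftrightarrow> ?characterization")
proof
  assume "\<exists>f. alpha_labeling V E f (int k)"
  then obtain f where f: "alpha_labeling V E f (int k)" ..
  then have "card V \<le> card E + 1" "bipartite V E"
    using card_le_if_labels_in_range bipartite_if_separates_at[OF simple]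
    unfolding alpha_labeling_iff by blast+
  moreover obtain xs ys where "ordered_bipartition (hatV V E) (hatE E) xs ys"
    "graceful_mat (biadj (hatE E) xs ys)" "length xs = k + 1"
    by (rule graceful_split_if_alpha_labeling[OF simple f])
  ultimately show ?characterization by auto
qed (auto intro: alpha_labeling_if_graceful_split[OF simple])

lemma completely_graceful_hat_iff_graceful:
  assumes "finite V" "card V \<le> card E + 1"
  shows "(\<exists>xs ys. ordered_bipartition (hatV V E) (hatE E) xs ys \<and>
      completely_graceful_mat (biadj (hatE E) xs ys) \<and> dim_row (biadj (hatE E) xs ys) = k + 1) \<longleftrightarrow>
    (\<exists>xs ys. ordered_bipartition (hatV V E) (hatE E) xs ys \<and>
      graceful_mat (biadj (hatE E) xs ys) \<and> dim_row (biadj (hatE E) xs ys) = k + 1)"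
  using completely_graceful_if_graceful_biadj graceful_if_completely_graceful
    card_hatV[OF assms] card_hatE
  by (metis order_refl)

theorem theorem2p6:
  fixes V :: "'a set" and E :: "'a set set" and k :: nat
  assumes "simple_graph V E"
  shows "((\<exists>f. alpha_labeling V E f (int k)) \<longleftrightarrow>
            card V \<le> card E + 1 \<and> bipartite V E \<and>
            (\<exists>xs ys. ordered_bipartition (hatV V E) (hatE E) xs ys \<and>
                     graceful_mat (biadj (hatE E) xs ys) \<and>
                     dim_row (biadj (hatE E) xs ys) = k + 1))
       \<and> ((\<exists>f. complete_alpha_labeling V E f (int k)) \<longleftrightarrow>
            card V = card E + 1 \<and> bipartite V E \<and>
            (\<exists>xs ys. ordered_bipartition (hatV V E) (hatE E) xs ys \<and>
                     completely_graceful_mat (biadj (hatE E) xs ys) \<and>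
                     dim_row (biadj (hatE E) xs ys) = k + 1))"
proof -
  have "finite V" using assms unfolding simple_graph_def by blast
  have "(\<exists>f. complete_alpha_labeling V E f (int k)) \<longleftrightarrow>
      card V = card E + 1 \<and> (\<exists>f. alpha_labeling V E f (int k))"
    using complete_alpha_labeling_iff by blast
  then show ?thesis
    using alpha_labeling_iff_graceful_biadj[OF assms, of k]
      completely_graceful_hat_iff_graceful[OF \<open>finite V\<close>, of E k]
    by auto
qed

end
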